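(* Let $L(0,n-1)$ be a path with thresholds $t$ as in the context, let $\lambda\ge1$, and let $0\le j<k\le n-1$ be such that $t(j)=t(k)=1$ and $t(j+1)=\cdots=t(k-1)=2$. Let $p:V\to\{0,1,2\}$ be any incentive function that solves the TBI problem on $L(0,n-1)$ with time bound $\lambda$ (i.e. $\mathsf{Influenced}[p,\lambda]=V$). Then $$\sum_{i=j+1}^{k-1}p(i)\ \ge\ \begin{cases} k-j-2 & \text{if $j+1$ is influenced by $j$ and $k-1$ is influenced by $k$},\\ k-j-1 & \text{if exactly one of: $j+1$ is influenced by $j$, $k-1$ is influenced by $k$},\\ k-j & \text{otherwise.}\end{cases}$$
   Context: Influence model: a network is a graph $G=(V,E)$; $N(v)$ is the neighbourhood of $v$ and $d(v)=|N(v)|$. A threshold function $t:V\to\{1,2,\dots\}$ satisfies $1\le t(v)\le d(v)$. An incentive function is $p:V\to\{0,1,2,\dots\}$ with $0\le p(v)\le t(v)$. The influence process starting from $p$: $\mathsf{Influenced}[p,0]=\{v: p(v)=t(v)\}$ and, for $\ell>0$, $\mathsf{Influenced}[p,\ell]=\mathsf{Influenced}[p,\ell-1]\cup\{v: |N(v)\cap \mathsf{Influenced}[p,\ell-1]|\ge t(v)-p(v)\}$. A node $v$ is influenced at round $\ell$ if it belongs to $\mathsf{Influenced}[p,\ell]$ but not to $\mathsf{Influenced}[p,\ell-1]$ (round $0$: belongs to $\mathsf{Influenced}[p,0]$). The TBI problem with time bound $\lambda$ asks for minimum-cost $p$ with $\mathsf{Influenced}[p,\lambda]=V$. The path $L(0,n-1)$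 has nodes $0,\dots,n-1$ and edges $\{i,i+1\}$, $0\le i\le n-2$; $t(0)=t(n-1)=1$ and $t(i)\in\{1,2\}$ for $1\le i\le n-2$. For neighbours $u,w$, "$u$ is influenced by $w$" means that $w$ is influenced at a round strictly earlier than the round at which $u$ is influenced (so $w$ contributes to the influence received by $u$). *)

theory Defs
  imports Main
begin

definition path_nbrs :: "nat \<Rightarrow> nat \<Rightarrow> nat set" where
  "path_nbrs n v = {u. u < n \<and> (u = v + 1 \<or> v = u + 1)}"

fun Influenced :: "nat \<Rightarrow> (nat \<Rightarrow> nat) \<Rightarrow> (nat \<Rightarrow> nat) \<Rightarrow> nat \<Rightarrow> nat set" where
  "Influenced n t p 0 = {v. v < n \<and> p v = t v}"
| "Influenced n t p (Suc l) = Influenced n t p l \<union>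
     {v. v < n \<and> card (path_nbrs n v \<inter> Influenced n t p l) \<ge> t v - p v}"

text \<open>The round at which v is influenced (meaningful when v is eventually influenced).\<close>
definition infl_round :: "nat \<Rightarrow> (nat \<Rightarrow> nat) \<Rightarrow> (nat \<Rightarrow> nat) \<Rightarrow> nat \<Rightarrow> nat" where
  "infl_round n t p v = (LEAST l. v \<in> Influenced n t p l)"

definition influenced_by :: "nat \<Rightarrow> (nat \<Rightarrow> nat) \<Rightarrow> (nat \<Rightarrow> nat) \<Rightarrow> nat \<Rightarrow> nat \<Rightarrow> bool" where
  "influenced_by n t p u w \<longleftrightarrow> infl_round n t p w < infl_round n t p u"

end

theory Submission
  imports Defs
begin

text \<open>A node i of threshold 2 needs, besides its incentive, one unit of influence per neighbour
  influenced strictly before it, so p(i) >= 2 - e(i), where e(i) counts such neighbours.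
  Summing over j < i < k, an edge between two interior nodes is counted at most once, since
  influence flows along it in at most one direction, and the two boundary edges are counted
  exactly when j + 1 is influenced by j, resp. k - 1 by k. So the e(i) sum to at most k - j - 2
  plus these two indicators.\<close>

lemma sum_strictly_smaller_neighbours_le:
  fixes f :: "nat \<Rightarrow> 'a::linorder"
  assumes "j + 1 < k"
  shows "(\<Sum>i = j + 1..k - 1. of_bool (f (i - 1) < f i) + of_bool (f (i + 1) < f i) :: int)
    \<le> int k - int j - 2 + of_bool (f j < f (j + 1)) + of_bool (f k < f (k - 1))"
proof -
  define d where "d = k - (j + 2)"
  have k: "k = j + 2 + d" using assms unfolding d_def by simp
  show ?thesis unfolding k
  proof (induction d)
    case 0
    then show ?case by simp
  next
    case (Suc d)
    let ?m = "j + 2 + d"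
    have "{j + 1..j + 2 + Suc d - 1} = insert ?m {j + 1..?m - 1}" by auto
    moreover have "of_bool (f (?m - 1) < f ?m) + of_bool (f ?m < f (?m - 1)) \<le> (1 :: int)"
      by auto
    ultimately show ?case using Suc.IH by simp
  qed
qed

lemma threshold_le_incentive_plus_earlier_nbrs:
  assumes "v \<in> Influenced n t p l"
  shows "t v \<le> p v + card {u \<in> path_nbrs n v. infl_round n t p u < infl_round n t p v}"
proof -
  let ?r = "infl_round n t p"
  have v_at_round: "v \<in> Influenced n t p (?r v)"
    unfolding infl_round_def using assms by (rule LeastI)
  show ?thesis
  proof (cases "?r v")
    case 0
    then show ?thesis using v_at_round by simp
  next
    case (Suc R)
    have "v \<notin> Influenced n t p R"
      using Suc not_less_Least[of R "\<lambda>l. v \<in> Influenced n t p l"]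
      unfolding infl_round_def by simp
    then have "t v - p v \<le> card (path_nbrs n v \<inter> Influenced n t p R)"
      using v_at_round Suc by simp
    also have "\<dots> \<le> card {u \<in> path_nbrs n v. ?r u < ?r v}"
    proof (rule card_mono)
      show "finite {u \<in> path_nbrs n v. ?r u < ?r v}" by (simp add: path_nbrs_def)
      show "path_nbrs n v \<inter> Influenced n t p R \<subseteq> {u \<in> path_nbrs n v. ?r u < ?r v}"
        using Suc by (auto simp: infl_round_def intro: Least_le le_less_trans)
    qed
    finally show ?thesis by simp
  qed
qed

lemma path_nbrs_interior: "0 < i \<Longrightarrow> i + 1 < n \<Longrightarrow> path_nbrs n i = {i - 1, i + 1}"
  by (auto simp: path_nbrs_def)

lemma threshold_le_incentive_plus_earlier_nbrs_interior:
  assumes "i \<in> Influenced n t p l" and "0 < i" and "i + 1 < n"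
  shows "t i \<le> p i + of_bool (infl_round n t p (i - 1) < infl_round n t p i)
    + of_bool (infl_round n t p (i + 1) < infl_round n t p i)"
proof -
  let ?r = "infl_round n t p"
  have "{u \<in> path_nbrs n i. ?r u < ?r i} =
      (if ?r (i - 1) < ?r i then {i - 1} else {}) \<union> (if ?r (i + 1) < ?r i then {i + 1} else {})"
    using assms(2,3) by (auto simp: path_nbrs_interior)
  then have "card {u \<in> path_nbrs n i. ?r u < ?r i} =
      of_bool (?r (i - 1) < ?r i) + of_bool (?r (i + 1) < ?r i)"
    using assms(2) by auto
  then show ?thesis using threshold_le_incentive_plus_earlier_nbrs[OF assms(1)] by simp
qed

theorem lemma1:
  fixes n :: nat and t p :: "nat \<Rightarrow> nat" and lam j k :: nat
  assumes n2: "n \<ge> 2"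
    and t_end: "t 0 = 1" "t (n - 1) = 1"
    and t_mid: "\<And>i. 1 \<le> i \<Longrightarrow> i \<le> n - 2 \<Longrightarrow> t i \<in> {1, 2}"
    and p_le: "\<And>v. v < n \<Longrightarrow> p v \<le> t v"
    and lam: "lam \<ge> 1"
    and jk: "j + 1 < k" "k \<le> n - 1"
    and tj: "t j = 1" and tk: "t k = 1"
    and tmid2: "\<And>i. j < i \<Longrightarrow> i < k \<Longrightarrow> t i = 2"
    and solves: "Influenced n t p lam = {0..<n}"
  shows "(\<Sum>i = j + 1..k - 1. int (p i)) \<ge>
    (if influenced_by n t p (j + 1) j \<and> influenced_by n t p (k - 1) k
       then int k - int j - 2
     else if influenced_by n t p (j + 1) j \<noteq> influenced_by n t p (k - 1) k
       then int k - int j - 1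
     else int k - int j)"
proof -
  let ?r = "infl_round n t p"
  let ?e = "\<lambda>i. of_bool (?r (i - 1) < ?r i) + of_bool (?r (i + 1) < ?r i) :: int"
  have node_bound: "2 - ?e i \<le> int (p i)" if "i \<in> {j + 1..k - 1}" for i
    using that jk solves tmid2[of i]
      threshold_le_incentive_plus_earlier_nbrs_interior[of i n t p lam] by auto
  have "int k - int j - of_bool (?r j < ?r (j + 1)) - of_bool (?r k < ?r (k - 1))
      \<le> 2 * (int k - int j - 1) - (\<Sum>i = j + 1..k - 1. ?e i)"
    using sum_strictly_smaller_neighbours_le[OF jk(1), of ?r] by simp
  also have "\<dots> = (\<Sum>i = j + 1..k - 1. 2 - ?e i)"
    using jk(1) by (simp add: sum_subtractf)
  also have "\<dots> \<le> (\<Sum>i = j + 1..k - 1. int (p i))"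
    using node_bound by (rule sum_mono)
  finally show ?thesis
    unfolding influenced_by_def by (cases "?r j < ?r (j + 1)"; cases "?r k < ?r (k - 1)") simp_all
qed

end
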